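(* Let $r$ be a positive integer and let $M\in\{0,1\}^{n\times n}$ with $\operatorname{rank}(M)\leq r$. Let $d=|M|/n$ and let $\Delta$ be the maximum number of $1$ entries in a row or column of $M$. If $d\leq n/2$ and $\Delta\leq 1.1d$, then $$\operatorname{pdisc}(M)\geq\frac{d^{1/2}n^{3/2}}{7\sqrt{r}}.$$
   Context: $|M|$ is the number of $1$ entries of $M$; let $N=2n$ and $p=|M|/n^2$. The symmetrization of $M$ is the symmetric matrix $A\in\mathbb{R}^{N\times N}$ with $A_{i,j+n}=A_{j+n,i}=M_{i,j}$ and all other entries $0$. $L\in\mathbb{R}^{N\times N}$ is the adjacency matrix of the complete bipartite graph with parts $[n]$ and $[n+1,N]$. For $X\in\mathbb{R}^{N\times N}$, $\operatorname{disc}(X)=\langle X,A\rangle-p\langle X,L\rangle$ (entrywise inner product), and $\operatorname{pdisc}(M)=\max\{\operatorname{disc}(X): X\text{ symmetric positive semidefinite},\ X_{i,i}\leq1\ \forall i\}$. *)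

theory Defs
  imports "HOL-Analysis.Analysis"
begin

(* The index set [N] = [2n] of the symmetrization is the sum type 'n + 'n:
   Inl i stands for row index i in [n], Inr j stands for index j + n. *)

definition zero_one_matrix :: "real^'n::finite^'n \<Rightarrow> bool" where
  "zero_one_matrix M \<longleftrightarrow> (\<forall>i j. M $ i $ j = 0 \<or> M $ i $ j = 1)"

definition num_ones :: "real^'n::finite^'n \<Rightarrow> nat" where
  "num_ones M = card {(i, j). M $ i $ j = 1}"

definition row_ones :: "real^'n::finite^'n \<Rightarrow> 'n \<Rightarrow> nat" where
  "row_ones M i = card {j. M $ i $ j = 1}"

definition col_ones :: "real^'n::finite^'n \<Rightarrow> 'n \<Rightarrow> nat" where
  "col_ones M j = card {i. M $ i $ j = 1}"

definition max_degree :: "real^'n::finite^'n \<Rightarrow> nat" where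
  "max_degree M = max (Max (range (row_ones M))) (Max (range (col_ones M)))"

definition symmetrization :: "real^'n::finite^'n \<Rightarrow> real^('n::finite + 'n)^('n + 'n)" where
  "symmetrization M = (\<chi> a b. case (a, b) of
      (Inl i, Inr j) \<Rightarrow> M $ i $ j
    | (Inr j, Inl i) \<Rightarrow> M $ i $ j
    | _ \<Rightarrow> 0)"

definition bip_L :: "real^('n::finite + 'n)^('n + 'n)" where
  "bip_L = (\<chi> a b. case (a, b) of
      (Inl i, Inr j) \<Rightarrow> 1
    | (Inr j, Inl i) \<Rightarrow> 1
    | _ \<Rightarrow> 0)"

definition frob_inner :: "real^'m::finite^'m \<Rightarrow> real^'m::finite^'m \<Rightarrow> real" where
  "frob_inner X Y = (\<Sum>a\<in>UNIV. \<Sum>b\<in>UNIV. X $ a $ b * Y $ a $ b)"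

definition psd :: "real^'m::finite^'m \<Rightarrow> bool" where
  "psd X \<longleftrightarrow> transpose X = X \<and> (\<forall>x. x \<bullet> (X *v x) \<ge> 0)"

definition density :: "real^'n::finite^'n \<Rightarrow> real" where
  "density M = real (num_ones M) / (real CARD('n))^2"

definition disc :: "real^'n::finite^'n \<Rightarrow> real^('n + 'n)^('n + 'n) \<Rightarrow> real" where
  "disc M X = frob_inner X (symmetrization M) - density M * frob_inner X bip_L"

definition pdisc :: "real^'n::finite^'n \<Rightarrow> real" where
  "pdisc M = Sup {disc M X | X. psd X \<and> (\<forall>a. X $ a $ a \<le> 1)}"

end

theory Submission
  imports Defs
begin

text \<open>Projecting the standard basis vectors onto the row space of \<open>M\<close> gives vectors \<open>q\<^sub>j\<close> with
  \<open>\<langle>M\<^sub>i, q\<^sub>j\<rangle> = M\<^sub>i\<^sub>j\<close> and \<open>\<Sum>\<^sub>j |q\<^sub>j|\<^sup>2 = rank M \<le> r\<close>, so by Markov's inequality at most half of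
  the columns are heavy, i.e. have \<open>|q\<^sub>j|\<^sup>2 > 2r/n\<close>. The Gram matrix of the rows \<open>M\<^sub>i/\<surd>\<Delta>\<close> and of
  the vectors \<open>q\<^sub>j/\<surd>(2r/n)\<close> for the light columns (zero for the heavy ones) is feasible, and its
  off-diagonal block is \<open>M\<close> restricted to the light columns, scaled by \<open>1/\<surd>(2r\<Delta>/n)\<close>. Since
  \<open>\<Delta> \<le> 1.1d\<close>, the heavy columns hold at most \<open>0.55nd\<close> of the \<open>nd\<close> ones, and with \<open>p \<le> 1/2\<close>
  the discrepancy of this matrix is at least \<open>0.45nd/\<surd>(2.2dr/n)\<close>.\<close>

lemma sum_UNIV_Plus:
  "(\<Sum>a\<in>(UNIV::('a::finite + 'b::finite) set). f a) = (\<Sum>i\<in>UNIV. f (Inl i)) + (\<Sum>j\<in>UNIV. f (Inr j))"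
  using sum.Plus[of UNIV UNIV f] by (simp add: comp_def)

lemma card_eq_sum_zero_one:
  fixes f :: "'a::finite \<Rightarrow> real"
  assumes "\<And>x. f x = 0 \<or> f x = 1"
  shows "real (card {x. f x = 1}) = (\<Sum>x\<in>UNIV. f x)"
proof -
  have "(\<Sum>x\<in>UNIV. f x) = (\<Sum>x\<in>UNIV. if f x = 1 then 1 else 0)"
    by (rule sum.cong) (use assms in auto)
  then show ?thesis
    by (simp add: sum.If_cases Int_def)
qed

lemma card_gt_mult_le_sum:
  fixes f :: "'a \<Rightarrow> real"
  assumes "finite A" "\<And>x. x \<in> A \<Longrightarrow> 0 \<le> f x"
  shows "real (card {x\<in>A. c < f x}) * c \<le> sum f A"
proof -
  have "real (card {x\<in>A. c < f x}) * c = (\<Sum>x\<in>{x\<in>A. c < f x}. c)"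
    by simp
  also have "\<dots> \<le> (\<Sum>x\<in>{x\<in>A. c < f x}. f x)"
    by (rule sum_mono) simp
  also have "\<dots> \<le> sum f A"
    by (rule sum_mono2) (use assms in auto)
  finally show ?thesis .
qed

lemma zero_one_matrixD: "zero_one_matrix M \<Longrightarrow> M $ i $ j = 0 \<or> M $ i $ j = 1"
  unfolding zero_one_matrix_def by blast

lemma num_ones_eq_sum:
  fixes M :: "real^'n::finite^'n"
  assumes "zero_one_matrix M"
  shows "real (num_ones M) = (\<Sum>i\<in>UNIV. \<Sum>j\<in>UNIV. M $ i $ j)"
proof -
  have "{(i, j). M $ i $ j = 1} = {x. (\<lambda>(i, j). M $ i $ j) x = 1}"
    by auto
  then have "real (num_ones M) = (\<Sum>x\<in>UNIV. (\<lambda>(i, j). M $ i $ j) x)"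
    unfolding num_ones_def
    using card_eq_sum_zero_one[of "\<lambda>(i, j). M $ i $ j"] zero_one_matrixD[OF assms]
    by (simp add: case_prod_beta)
  also have "\<dots> = (\<Sum>i\<in>UNIV. \<Sum>j\<in>UNIV. M $ i $ j)"
    by (simp add: sum.cartesian_product UNIV_Times_UNIV[symmetric] del: UNIV_Times_UNIV)
  finally show ?thesis .
qed

lemma row_ones_eq_sum:
  "zero_one_matrix M \<Longrightarrow> real (row_ones M i) = (\<Sum>j\<in>UNIV. M $ i $ j)"
  unfolding row_ones_def by (rule card_eq_sum_zero_one) (rule zero_one_matrixD)

lemma col_ones_eq_sum:
  "zero_one_matrix M \<Longrightarrow> real (col_ones M j) = (\<Sum>i\<in>UNIV. M $ i $ j)"
  unfolding col_ones_def by (rule card_eq_sum_zero_one) (rule zero_one_matrixD)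

lemma num_ones_eq_sum_col_ones:
  "zero_one_matrix M \<Longrightarrow> real (num_ones M) = (\<Sum>j\<in>UNIV. real (col_ones M j))"
  by (simp add: num_ones_eq_sum col_ones_eq_sum) (rule sum.swap)

lemma row_ones_le_max_degree: "row_ones M i \<le> max_degree M"
  unfolding max_degree_def by (auto intro!: Max_ge simp: le_max_iff_disj)

lemma col_ones_le_max_degree: "col_ones M j \<le> max_degree M"
  unfolding max_degree_def by (auto intro!: Max_ge simp: le_max_iff_disj)

lemma max_degree_pos:
  fixes M :: "real^'n::finite^'n"
  assumes "num_ones M \<noteq> 0"
  shows "0 < max_degree M"
proof -
  obtain i j where "M $ i $ j = 1"
    using assms unfolding num_ones_def by fastforce
  then have "0 < row_ones M i"
    unfolding row_ones_def by (auto simp: card_gt_0_iff)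
  then show ?thesis
    using row_ones_le_max_degree[of M i] by linarith
qed

lemma col_ones_light_columns_ge:
  fixes M :: "real^'n::finite^'n" and f :: "'n \<Rightarrow> real"
  assumes "zero_one_matrix M" "0 < r" "\<And>j. 0 \<le> f j" "(\<Sum>j\<in>UNIV. f j) \<le> r"
  shows "real (num_ones M) - real CARD('n) / 2 * real (max_degree M)
           \<le> (\<Sum>j\<in>{j. f j \<le> 2 * r / real CARD('n)}. real (col_ones M j))"
proof -
  define n where "n = real CARD('n)"
  define heavy where "heavy = {j. 2 * r / n < f j}"
  have "real (card heavy) * (2 * r / n) \<le> r"
    using card_gt_mult_le_sum[of UNIV f "2 * r / n"] assms(3,4) unfolding heavy_def by simp
  then have card_heavy: "real (card heavy) \<le> n / 2"
    using assms(2) by (simp add: n_def field_simps)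
  have "(\<Sum>j\<in>heavy. real (col_ones M j)) \<le> real (card heavy) * real (max_degree M)"
    using sum_bounded_above[of heavy "\<lambda>j. real (col_ones M j)" "real (max_degree M)"]
      col_ones_le_max_degree[of M] by simp
  also have "\<dots> \<le> n / 2 * real (max_degree M)"
    using card_heavy by (rule mult_right_mono) simp
  moreover have "real (num_ones M) = (\<Sum>j\<in>{j. f j \<le> 2 * r / n}. real (col_ones M j))
      + (\<Sum>j\<in>heavy. real (col_ones M j))"
  proof -
    have "UNIV - {j. f j \<le> 2 * r / n} = heavy"
      by (auto simp: heavy_def not_le)
    then show ?thesis
      unfolding num_ones_eq_sum_col_ones[OF assms(1)]
      using sum.Int_Diff[of UNIV "\<lambda>j. real (col_ones M j)" "{j. f j \<le> 2 * r / n}"] by simp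
  qed
  ultimately show ?thesis
    unfolding n_def by linarith
qed

lemma psd_symmetric: "psd X \<Longrightarrow> X $ b $ a = X $ a $ b"
  unfolding psd_def by (metis transpose_def vec_lambda_beta)

lemma psd_abs_entry_le:
  fixes X :: "real^'m::finite^'m"
  assumes "psd X"
  shows "2 * \<bar>X $ a $ b\<bar> \<le> X $ a $ a + X $ b $ b"
proof -
  have quadratic_form: "(axis a 1 + t *\<^sub>R axis b 1) \<bullet> (X *v (axis a 1 + t *\<^sub>R axis b 1))
        = X $ a $ a + 2 * t * X $ a $ b + t * t * X $ b $ b" for t :: real
    using psd_symmetric[OF assms, of a b]
    by (simp add: matrix_vector_right_distrib matrix_vector_mult_scaleR inner_add_left inner_add_right
        matrix_vector_mult_basis inner_axis' algebra_simps column_def)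
  have "0 \<le> X $ a $ a + 2 * t * X $ a $ b + t * t * X $ b $ b" for t
    using assms unfolding psd_def quadratic_form[symmetric] by blast
  from this[of 1] this[of "-1"] show ?thesis
    by linarith
qed

lemma psd_gram:
  fixes w :: "'m::finite \<Rightarrow> 'v::real_inner"
  shows "psd (\<chi> a b. w a \<bullet> w b)"
  unfolding psd_def
proof
  show "transpose (\<chi> a b. w a \<bullet> w b) = (\<chi> a b. w a \<bullet> w b)"
    by (simp add: transpose_def vec_eq_iff inner_commute)
  show "\<forall>x. 0 \<le> x \<bullet> ((\<chi> a b. w a \<bullet> w b) *v x)"
  proof
    fix x :: "real^'m"
    have "x \<bullet> ((\<chi> a b. w a \<bullet> w b) *v x) = (\<Sum>a\<in>UNIV. \<Sum>b\<in>UNIV. x $ a * x $ b * (w a \<bullet> w b))"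
      unfolding inner_vec_def[of x] matrix_vector_mult_def
      by (simp add: sum_distrib_left ac_simps)
    also have "\<dots> = (\<Sum>a\<in>UNIV. x $ a *\<^sub>R w a) \<bullet> (\<Sum>b\<in>UNIV. x $ b *\<^sub>R w b)"
      by (simp add: inner_sum_left inner_sum_right sum_distrib_left ac_simps)
        (subst sum.swap, simp add: ac_simps)
    finally show "0 \<le> x \<bullet> ((\<chi> a b. w a \<bullet> w b) *v x)"
      by simp
  qed
qed

lemma bdd_above_disc:
  fixes M :: "real^'n::finite^'n"
  shows "bdd_above {disc M X | X. psd X \<and> (\<forall>a. X $ a $ a \<le> 1)}"
proof -
  define C where "C = (\<chi> a b. symmetrization M $ a $ b - density M * bip_L $ a $ b)"
  have "disc M X \<le> (\<Sum>a\<in>UNIV. \<Sum>b\<in>UNIV. \<bar>C $ a $ b\<bar>)"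
    if "psd X" "\<forall>a. X $ a $ a \<le> 1" for X
  proof -
    have "disc M X = (\<Sum>a\<in>UNIV. \<Sum>b\<in>UNIV. X $ a $ b * C $ a $ b)"
      unfolding disc_def frob_inner_def C_def
      by (simp add: right_diff_distrib sum_subtractf sum_distrib_left mult.left_commute)
    also have "\<dots> \<le> (\<Sum>a\<in>UNIV. \<Sum>b\<in>UNIV. \<bar>C $ a $ b\<bar>)"
    proof (intro sum_mono)
      fix a b
      have abs_X: "\<bar>X $ a $ b\<bar> \<le> 1"
        using psd_abs_entry_le[OF \<open>psd X\<close>, of a b] that(2)[rule_format, of a]
          that(2)[rule_format, of b] by linarith
      have "X $ a $ b * C $ a $ b \<le> \<bar>X $ a $ b\<bar> * \<bar>C $ a $ b\<bar>"
        by (metis abs_ge_self abs_mult)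
      also have "\<dots> \<le> \<bar>C $ a $ b\<bar>"
        using abs_X by (simp add: mult_left_le_one_le)
      finally show "X $ a $ b * C $ a $ b \<le> \<bar>C $ a $ b\<bar>" .
    qed
    finally show ?thesis .
  qed
  then show ?thesis
    by (auto simp: bdd_above_def)
qed

lemma disc_le_pdisc: "psd X \<Longrightarrow> \<forall>a. X $ a $ a \<le> 1 \<Longrightarrow> disc M X \<le> pdisc M"
  unfolding pdisc_def by (rule cSup_upper) (use bdd_above_disc in auto)

lemma disc_gram_le_pdisc:
  fixes w :: "'n::finite + 'n \<Rightarrow> 'v::real_inner"
  assumes "\<And>a. w a \<bullet> w a \<le> 1"
  shows "disc M (\<chi> a b. w a \<bullet> w b) \<le> pdisc M"
  by (rule disc_le_pdisc[OF psd_gram]) (simp add: assms)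

lemma pdisc_nonneg: "0 \<le> pdisc M"
  using disc_gram_le_pdisc[of "\<lambda>_. 0 :: real" M] by (simp add: disc_def frob_inner_def)

lemma frob_inner_bipartite:
  fixes X :: "real^('n::finite + 'n)^('n + 'n)" and g :: "'n \<Rightarrow> 'n \<Rightarrow> real"
  assumes "\<And>a b. X $ a $ b = X $ b $ a"
  shows "frob_inner X (\<chi> a b. case (a, b) of (Inl i, Inr j) \<Rightarrow> g i j | (Inr j, Inl i) \<Rightarrow> g i j | _ \<Rightarrow> 0)
           = 2 * (\<Sum>i\<in>UNIV. \<Sum>j\<in>UNIV. X $ Inl i $ Inr j * g i j)"
proof -
  have "(\<Sum>j\<in>UNIV. \<Sum>i\<in>UNIV. X $ Inr j $ Inl i * g i j) = (\<Sum>i\<in>UNIV. \<Sum>j\<in>UNIV. X $ Inl i $ Inr j * g i j)"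
    by (subst sum.swap) (simp add: assms)
  then show ?thesis
    unfolding frob_inner_def by (simp add: sum_UNIV_Plus)
qed

lemma disc_eq_off_diagonal_sums:
  fixes M :: "real^'n::finite^'n"
  assumes "\<And>a b. X $ a $ b = X $ b $ a"
  shows "disc M X = 2 * (\<Sum>i\<in>UNIV. \<Sum>j\<in>UNIV. X $ Inl i $ Inr j * M $ i $ j)
                   - 2 * density M * (\<Sum>i\<in>UNIV. \<Sum>j\<in>UNIV. X $ Inl i $ Inr j)"
  using frob_inner_bipartite[OF assms, of "\<lambda>i j. M $ i $ j"] frob_inner_bipartite[OF assms, of "\<lambda>_ _. 1"]
  unfolding disc_def symmetrization_def bip_L_def by simp

lemma row_space_projections:
  fixes M :: "real^'n::finite^'m::finite"
  obtains q :: "'n \<Rightarrow> real^'n" where "\<And>i j. M $ i \<bullet> q j = M $ i $ j"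
    and "(\<Sum>j\<in>UNIV. q j \<bullet> q j) = real (rank M)"
proof -
  obtain B where B: "B \<subseteq> span (rows M)" "pairwise orthogonal B" "\<And>x. x \<in> B \<Longrightarrow> norm x = 1"
      "independent B" "card B = dim (span (rows M))" "span B = span (rows M)"
    using orthonormal_basis_subspace[of "span (rows M)"] by auto
  have "finite B"
    using B(4) independent_imp_finite by blast
  define q where "q j = (\<Sum>b\<in>B. (b $ j) *\<^sub>R b)" for j
  have q_reproduces: "x \<bullet> q j = x $ j" if "x \<in> span B" for x j
  proof -
    have "x \<bullet> q j = (\<Sum>b\<in>B. (x \<bullet> b) *\<^sub>R b) $ j"
      unfolding q_def by (simp add: inner_sum_right sum_component mult.commute)
    also have "\<dots> = x $ j"
      using orthonormal_basis_expand[OF B(2) B(3) that \<open>finite B\<close>] by simp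
    finally show ?thesis .
  qed
  have "q j \<in> span B" for j
    unfolding q_def by (simp add: span_clauses span_sum)
  then have "(\<Sum>j\<in>UNIV. q j \<bullet> q j) = (\<Sum>j\<in>UNIV. \<Sum>b\<in>B. b $ j * b $ j)"
    using q_reproduces unfolding q_def by (simp add: sum_component)
  also have "\<dots> = (\<Sum>b\<in>B. b \<bullet> b)"
    by (subst sum.swap) (simp add: inner_vec_def)
  also have "\<dots> = real (rank M)"
    using B(3,5) by (simp add: norm_eq_1 row_rank_def dim_span)
  finally have "(\<Sum>j\<in>UNIV. q j \<bullet> q j) = real (rank M)" .
  moreover have "M $ i \<in> span B" for i
  proof -
    have "M $ i = row i M"
      by (simp add: row_def vec_eq_iff)
    then show ?thesis
      using B(6) by (auto simp: rows_def intro: span_base)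
  qed
  ultimately show ?thesis
    using that q_reproduces by blast
qed

lemma pdisc_ge_light_columns:
  fixes M :: "real^'n::finite^'n" and q :: "'n \<Rightarrow> real^'n"
  assumes M: "zero_one_matrix M"
    and D: "0 < D" "\<And>i. real (row_ones M i) \<le> D"
    and t: "0 < t"
    and q: "\<And>i j. M $ i \<bullet> q j = M $ i $ j"
    and light: "\<And>j. j \<in> G \<Longrightarrow> q j \<bullet> q j \<le> t"
  shows "2 * (1 - density M) * (\<Sum>j\<in>G. real (col_ones M j)) / sqrt (D * t) \<le> pdisc M"
proof -
  define w where "w x = (case x of
      Inl i \<Rightarrow> (1 / sqrt D) *\<^sub>R M $ i
    | Inr j \<Rightarrow> (if j \<in> G then (1 / sqrt t) *\<^sub>R q j else 0))" for x
  define X where "X = (\<chi> a b. w a \<bullet> w b)"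
  have "w a \<bullet> w a \<le> 1" for a
  proof (cases a)
    case (Inl i)
    have "M $ i \<bullet> M $ i = real (row_ones M i)"
      unfolding row_ones_eq_sum[OF M] inner_vec_def
      by (rule sum.cong) (use zero_one_matrixD[OF M] in auto)
    then show ?thesis
      using Inl D by (simp add: w_def)
  next
    case (Inr j)
    then show ?thesis
      using light[of j] t by (simp add: w_def)
  qed
  then have "disc M X \<le> pdisc M"
    unfolding X_def by (rule disc_gram_le_pdisc)
  have block: "X $ Inl i $ Inr j = (if j \<in> G then M $ i $ j / sqrt (D * t) else 0)" for i j
    by (simp add: X_def w_def q real_sqrt_mult)
  have block_times_M: "X $ Inl i $ Inr j * M $ i $ j = X $ Inl i $ Inr j" for i j
    using zero_one_matrixD[OF M, of i j] by (auto simp: block)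
  have block_sum: "(\<Sum>i\<in>UNIV. \<Sum>j\<in>UNIV. X $ Inl i $ Inr j)
      = (\<Sum>j\<in>G. real (col_ones M j)) / sqrt (D * t)"
  proof -
    have "(\<Sum>i\<in>UNIV. \<Sum>j\<in>UNIV. X $ Inl i $ Inr j) = (\<Sum>j\<in>G. \<Sum>i\<in>UNIV. M $ i $ j / sqrt (D * t))"
      by (subst sum.swap) (simp add: block sum.If_cases)
    then show ?thesis
      by (simp add: col_ones_eq_sum[OF M] sum_divide_distrib)
  qed
  have "X $ a $ b = X $ b $ a" for a b
    by (simp add: X_def inner_commute)
  then have "disc M X = 2 * (\<Sum>i\<in>UNIV. \<Sum>j\<in>UNIV. X $ Inl i $ Inr j)
      - 2 * density M * (\<Sum>i\<in>UNIV. \<Sum>j\<in>UNIV. X $ Inl i $ Inr j)"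
    using disc_eq_off_diagonal_sums[of X M] by (simp add: block_times_M)
  also have "\<dots> = 2 * (1 - density M) * (\<Sum>j\<in>G. real (col_ones M j)) / sqrt (D * t)"
    unfolding block_sum by (simp add: algebra_simps diff_divide_distrib)
  finally show ?thesis
    using \<open>disc M X \<le> pdisc M\<close> by simp
qed

lemma light_mass_bound:
  fixes n d \<Delta> r S :: real
  assumes pos: "0 < n" "0 < d" "0 < r" "0 < \<Delta>"
    and \<Delta>_le: "\<Delta> \<le> 1.1 * d"
    and S_ge: "n * d - n / 2 * \<Delta> \<le> S"
  shows "sqrt d * n powr (3/2) / (7 * sqrt r) \<le> S / sqrt (\<Delta> * (2 * r / n))"
proof -
  have "n / 2 * \<Delta> \<le> n / 2 * (1.1 * d)"
    using \<Delta>_le pos(1) by (intro mult_left_mono) auto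
  with S_ge have S_ge': "0.45 * n * d \<le> S"
    by (simp add: algebra_simps)
  moreover have "0 \<le> 0.45 * n * d"
    using pos by simp
  ultimately have S_nonneg: "0 \<le> S"
    by linarith
  have "\<Delta> * (2 * r / n) \<le> 4 * (d * r / n)"
    using \<Delta>_le pos by (simp add: field_simps)
  then have sqrt_le: "sqrt (\<Delta> * (2 * r / n)) \<le> 2 * sqrt (d * r / n)"
    by (metis real_sqrt_le_mono real_sqrt_mult real_sqrt_four)
  have "sqrt d * n powr (3/2) / (7 * sqrt r) = (2/7) * n * d / (2 * sqrt (d * r / n))"
    using pos powr_add[of n 1 "1/2"] powr_half_sqrt[of n]
    by (simp add: real_sqrt_mult real_sqrt_divide field_simps)
  also have "\<dots> \<le> 0.45 * n * d / (2 * sqrt (d * r / n))"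
    using pos by (intro divide_right_mono mult_right_mono) auto
  also have "\<dots> \<le> S / sqrt (\<Delta> * (2 * r / n))"
    by (rule frac_le[OF S_nonneg S_ge' _ sqrt_le]) (simp add: pos)
  finally show ?thesis .
qed

theorem lemma3p3:
  fixes M :: "real^'n::finite^'n" and r :: nat
  assumes "r > 0"
    and "zero_one_matrix M"
    and "rank M \<le> r"
    and "num_ones M / real CARD('n) \<le> real CARD('n) / 2"
    and "real (max_degree M) \<le> 1.1 * (num_ones M / real CARD('n))"
  shows "pdisc M \<ge> sqrt (num_ones M / real CARD('n)) * real CARD('n) powr (3/2) / (7 * sqrt (real r))"
proof (cases "num_ones M = 0")
  case True
  then show ?thesis
    using pdisc_nonneg[of M] by simp
next
  case False
  define n where "n = real CARD('n)"
  define \<Delta> where "\<Delta> = real (max_degree M)"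
  define t where "t = 2 * real r / n"
  obtain q :: "'n \<Rightarrow> real^'n" where q: "\<And>i j. M $ i \<bullet> q j = M $ i $ j"
    and sum_q: "(\<Sum>j\<in>UNIV. q j \<bullet> q j) = real (rank M)"
    using row_space_projections by blast
  define S where "S = (\<Sum>j\<in>{j. q j \<bullet> q j \<le> t}. real (col_ones M j))"
  have pos: "0 < n" "0 < \<Delta>" "0 < t"
    using max_degree_pos[OF False] assms(1) by (simp_all add: n_def \<Delta>_def t_def)
  have "2 * (1 - density M) * S / sqrt (\<Delta> * t) \<le> pdisc M"
    using pdisc_ge_light_columns[OF assms(2) pos(2) _ pos(3) q, of "{j. q j \<bullet> q j \<le> t}"]
      row_ones_le_max_degree[of M] unfolding S_def \<Delta>_def by simp
  moreover have "S / sqrt (\<Delta> * t) \<le> 2 * (1 - density M) * S / sqrt (\<Delta> * t)"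
  proof -
    have "density M \<le> 1 / 2"
      using assms(4) pos(1) unfolding density_def n_def by (simp add: power2_eq_square field_simps)
    moreover have "0 \<le> S"
      unfolding S_def by (simp add: sum_nonneg)
    ultimately have "S \<le> 2 * (1 - density M) * S"
      by (simp add: mult_le_cancel_right1)
    then show ?thesis
      by (rule divide_right_mono) (use pos in simp)
  qed
  moreover have "n * (num_ones M / n) - n / 2 * \<Delta> \<le> S"
    using col_ones_light_columns_ge[OF assms(2), of "real r" "\<lambda>j. q j \<bullet> q j"] sum_q assms(1,3) pos(1)
    unfolding S_def t_def n_def \<Delta>_def by simp
  then have "sqrt (num_ones M / n) * n powr (3/2) / (7 * sqrt r) \<le> S / sqrt (\<Delta> * t)"
    unfolding t_def using False assms(1,5) pos
    by (intro light_mass_bound) (simp_all add: n_def \<Delta>_def)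
  ultimately show ?thesis
    unfolding n_def by linarith
qed

end
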